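(* Let $(s,t)\in\mathbb{C}^2$ with $s\neq 0$. Then: (a) For all $z,w\in\mathbb{C}$, $\overline{K^{(s,t)}(z,w)}=c\,K^{(\overline{s},-t)}(w,z)$, where $c=1$ if $s+|s|\neq 0$ (i.e. $s$ is not a negative real number) and $c=-1$ if $s<0$. (b) For a fixed $w\in\mathbb{C}$, the function $K^{(s,t)}_w(z)=K^{(s,t)}(z,w)$ belongs to $F^2$ if and only if $|s|>|t|$.
   Context: $d\lambda(z)=\frac{1}{\pi}e^{-|z|^2}\,dA(z)$ is the Gaussian measure on $\mathbb{C}$ ($dA$ = area measure), and the Fock space is $F^2=L^2(\mathbb{C},d\lambda)\cap H(\mathbb{C})$, where $H(\mathbb{C})$ is the space of entire functions, with the inner product of $L^2(\mathbb{C},d\lambda)$. Complex square roots are principal: $\sqrt{z}=\sqrt{|z|}\,e^{i\theta/2}$ for $z=|z|e^{i\theta}$, $\theta\in(-\pi,\pi]$. For $(s,t)\in\mathbb{C}^2$ with $s\neq0$, $$K^{(s,t)}(z,w)=\frac{1}{\sqrt{s}}\exp\left[\frac{tz^2-\overline{t}\,\overline{w}^2+2z\overline{w}}{2s}\right],\qquad z,w\in\mathbb{C}.$$ *)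

theory Defs
  imports "HOL-Analysis.Analysis"
begin

definition gauss_measure :: "complex measure" where
  "gauss_measure = density lborel (\<lambda>z. ennreal (exp (- (cmod z)\<^sup>2) / pi))"

definition fock_space :: "(complex \<Rightarrow> complex) set" where
  "fock_space = {f. f holomorphic_on UNIV \<and> integrable gauss_measure (\<lambda>z. (cmod (f z))\<^sup>2)}"

definition Kst :: "complex \<Rightarrow> complex \<Rightarrow> complex \<Rightarrow> complex \<Rightarrow> complex" where
  "Kst s t z w = (1 / csqrt s) *
      exp ((t * z\<^sup>2 - cnj t * (cnj w)\<^sup>2 + 2 * z * cnj w) / (2 * s))"

end

theory Submission
  imports Defs "HOL-Probability.Probability"
begin

(* Part (a) is conjugation of the defining formula; the only subtlety is the principal square
   root, which commutes with conjugation off the closed negative real axis and changes sign on it.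
   For part (b), |K_w(z)|^2 e^(-|z|^2) is a constant multiple of the exponential of a real
   quadratic polynomial in (Re z, Im z) with quadratic part Re ((t/s) z^2) - |z|^2.  Integrating
   out one coordinate at a time with the one-dimensional Gaussian integral shows that such an
   exponential is integrable iff this quadratic form is negative definite, i.e. iff |t/s| < 1. *)

lemma nn_integral_exp_quadratic:
  fixes \<alpha> \<beta> \<gamma> :: real
  assumes "\<alpha> < 0"
  shows "(\<integral>\<^sup>+x. ennreal (exp (\<alpha> * x\<^sup>2 + \<beta> * x + \<gamma>)) \<partial>lborel)
       = ennreal (sqrt (pi / - \<alpha>) * exp (\<gamma> - \<beta>\<^sup>2 / (4 * \<alpha>)))"
proof -
  define \<mu> where "\<mu> = - \<beta> / (2 * \<alpha>)"
  define \<sigma> where "\<sigma> = sqrt (- 1 / (2 * \<alpha>))"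
  define K where "K = sqrt (pi / - \<alpha>) * exp (\<gamma> - \<beta>\<^sup>2 / (4 * \<alpha>))"
  have \<sigma>_pos: "\<sigma> > 0" and "K \<ge> 0"
    using assms by (auto simp: \<sigma>_def K_def divide_nonneg_neg intro!: mult_nonneg_nonneg)
  have variance: "2 * pi * \<sigma>\<^sup>2 = pi / - \<alpha>"
    using assms by (simp add: \<sigma>_def field_simps)
  have "\<alpha> * x\<^sup>2 + \<beta> * x + \<gamma> = (\<gamma> - \<beta>\<^sup>2 / (4 * \<alpha>)) + - (x - \<mu>)\<^sup>2 / (2 * \<sigma>\<^sup>2)" for x
    using assms by (simp add: \<sigma>_def \<mu>_def field_simps power2_eq_square)
  then have "exp (\<alpha> * x\<^sup>2 + \<beta> * x + \<gamma>) = exp (\<gamma> - \<beta>\<^sup>2 / (4 * \<alpha>)) * exp (- (x - \<mu>)\<^sup>2 / (2 * \<sigma>\<^sup>2))" for x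
    by (simp only: exp_add)
  then have density: "exp (\<alpha> * x\<^sup>2 + \<beta> * x + \<gamma>) = K * normal_density \<mu> \<sigma> x" for x
    using assms by (simp add: normal_density_def K_def variance)
  have "(\<integral>\<^sup>+x. ennreal (exp (\<alpha> * x\<^sup>2 + \<beta> * x + \<gamma>)) \<partial>lborel)
      = ennreal K * (\<integral>\<^sup>+x. ennreal (normal_density \<mu> \<sigma> x) \<partial>lborel)"
    using \<open>K \<ge> 0\<close> by (simp add: density ennreal_mult nn_integral_cmult)
  also have "(\<integral>\<^sup>+x. ennreal (normal_density \<mu> \<sigma> x) \<partial>lborel) = 1"
    using \<sigma>_pos by (subst nn_integral_eq_integral) auto
  finally show ?thesis by (simp add: K_def)
qed

lemma nn_integral_exp_quadratic_infinite:
  fixes \<alpha> \<beta> \<gamma> :: real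
  assumes "\<alpha> \<ge> 0"
  shows "(\<integral>\<^sup>+x. ennreal (exp (\<alpha> * x\<^sup>2 + \<beta> * x + \<gamma>)) \<partial>lborel) = \<infinity>"
proof -
  define f where "f x = ennreal (exp (\<alpha> * x\<^sup>2 + \<beta> * x + \<gamma>))" for x
  have [measurable]: "f \<in> borel_measurable borel"
    unfolding f_def by measurable
  have reflect: "(\<integral>\<^sup>+x. f x \<partial>lborel) = (\<integral>\<^sup>+x. f (- x) \<partial>lborel)"
    using nn_integral_real_affine[of f "-1" 0] by simp
  have "\<alpha> * x\<^sup>2 \<ge> 0" for x
    using assms by simp
  \<comment> \<open>one of \<open>\<beta> * x\<close> and \<open>\<beta> * (- x)\<close> is nonnegative\<close>
  then have lower: "ennreal (exp \<gamma>) \<le> f x + f (- x)" for x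
  proof (cases "\<beta> * x \<ge> 0")
    case True
    then have "ennreal (exp \<gamma>) \<le> f x"
      using \<open>\<alpha> * x\<^sup>2 \<ge> 0\<close> unfolding f_def by (intro ennreal_leI) simp
    then show ?thesis by (simp add: add_increasing2)
  next
    case False
    then have "ennreal (exp \<gamma>) \<le> f (- x)"
      using \<open>\<alpha> * x\<^sup>2 \<ge> 0\<close> unfolding f_def by (intro ennreal_leI) simp
    then show ?thesis by (simp add: add_increasing)
  qed
  have "(\<integral>\<^sup>+(x::real). ennreal (exp \<gamma>) \<partial>lborel) \<le> (\<integral>\<^sup>+x. f x + f (- x) \<partial>lborel)"
    by (rule nn_integral_mono) (rule lower)
  also have "\<dots> = 2 * (\<integral>\<^sup>+x. f x \<partial>lborel)"
    by (simp add: nn_integral_add reflect[symmetric] mult_2)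
  finally show ?thesis
    by (simp add: f_def ennreal_mult_top ennreal_mult_eq_top_iff top_unique)
qed

lemma nn_integral_exp_quadratic_finite_iff:
  fixes \<alpha> \<beta> \<gamma> :: real
  shows "(\<integral>\<^sup>+x. ennreal (exp (\<alpha> * x\<^sup>2 + \<beta> * x + \<gamma>)) \<partial>lborel) < \<infinity> \<longleftrightarrow> \<alpha> < 0"
  by (cases "\<alpha> < 0") (simp_all add: nn_integral_exp_quadratic nn_integral_exp_quadratic_infinite)

lemma nn_integral_exp_binary_quadratic_finite_iff:
  fixes A B C p q k :: real
  shows "(\<integral>\<^sup>+x. \<integral>\<^sup>+y. ennreal (exp (A * x\<^sup>2 + 2 * B * x * y + C * y\<^sup>2 + p * x + q * y + k)) \<partial>lborel \<partial>lborel) < \<infinity>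
     \<longleftrightarrow> C < 0 \<and> A * C - B\<^sup>2 > 0"
proof -
  have in_y: "A * x\<^sup>2 + 2 * B * x * y + C * y\<^sup>2 + p * x + q * y + k
      = C * y\<^sup>2 + (2 * B * x + q) * y + (A * x\<^sup>2 + p * x + k)" for x y
    by (simp add: algebra_simps)
  show ?thesis
  proof (cases "C < 0")
    case False
    then show ?thesis
      by (simp add: in_y nn_integral_exp_quadratic_infinite ennreal_mult_top)
  next
    case True
    define A' where "A' = A - B\<^sup>2 / C"
    have completed: "(A * x\<^sup>2 + p * x + k) - (2 * B * x + q)\<^sup>2 / (4 * C)
        = A' * x\<^sup>2 + (p - B * q / C) * x + (k - q\<^sup>2 / (4 * C))" for x
      using True by (simp add: A'_def field_simps power2_eq_square)
    have "0 < sqrt (pi / - C)"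
      using True by (simp add: divide_pos_neg)
    then have finite_cmult: "ennreal (sqrt (pi / - C)) * I < \<infinity> \<longleftrightarrow> I < \<infinity>" for I :: ennreal
      by (auto simp: ennreal_mult_less_top)
    have "(\<integral>\<^sup>+y. ennreal (exp (A * x\<^sup>2 + 2 * B * x * y + C * y\<^sup>2 + p * x + q * y + k)) \<partial>lborel)
        = ennreal (sqrt (pi / - C)) * ennreal (exp (A' * x\<^sup>2 + (p - B * q / C) * x + (k - q\<^sup>2 / (4 * C))))" for x
      unfolding in_y nn_integral_exp_quadratic[OF True] completed
      using \<open>0 < sqrt (pi / - C)\<close> by (simp add: ennreal_mult)
    then have iterated: "(\<integral>\<^sup>+x. \<integral>\<^sup>+y. ennreal (exp (A * x\<^sup>2 + 2 * B * x * y + C * y\<^sup>2 + p * x + q * y + k)) \<partial>lborel \<partial>lborel)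
        = ennreal (sqrt (pi / - C)) * (\<integral>\<^sup>+x. ennreal (exp (A' * x\<^sup>2 + (p - B * q / C) * x + (k - q\<^sup>2 / (4 * C)))) \<partial>lborel)"
      by (simp add: nn_integral_cmult)
    have "(\<integral>\<^sup>+x. \<integral>\<^sup>+y. ennreal (exp (A * x\<^sup>2 + 2 * B * x * y + C * y\<^sup>2 + p * x + q * y + k)) \<partial>lborel \<partial>lborel) < \<infinity>
        \<longleftrightarrow> (\<integral>\<^sup>+x. ennreal (exp (A' * x\<^sup>2 + (p - B * q / C) * x + (k - q\<^sup>2 / (4 * C)))) \<partial>lborel) < \<infinity>"
      unfolding iterated by (rule finite_cmult)
    also have "\<dots> \<longleftrightarrow> A' < 0"
      by (rule nn_integral_exp_quadratic_finite_iff)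
    also have "A' < 0 \<longleftrightarrow> A * C - B\<^sup>2 > 0"
      using True by (simp add: A'_def field_simps)
    finally show ?thesis
      using True by simp
  qed
qed

lemma lborel_complex_eq_distr_pair:
  "(lborel :: complex measure) = distr (lborel \<Otimes>\<^sub>M lborel) borel (\<lambda>p. Complex (fst p) (snd p))"
proof (rule lborel_eqI)
  fix l u :: complex
  assume le: "\<And>b. b \<in> Basis \<Longrightarrow> l \<bullet> b \<le> u \<bullet> b"
  have "Re l \<le> Re u" "Im l \<le> Im u"
    using le[of 1] le[of \<i>] by (auto simp: Basis_complex_def)
  moreover have "(\<lambda>p. Complex (fst p) (snd p)) -` box l u = box (Re l) (Re u) \<times> box (Im l) (Im u)"
    by (auto simp: box_def Basis_complex_def)
  ultimately show "emeasure (distr (lborel \<Otimes>\<^sub>M lborel) borel (\<lambda>p. Complex (fst p) (snd p))) (box l u)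
      = (\<Prod>b\<in>Basis. (u - l) \<bullet> b)"
    by (simp add: emeasure_distr space_pair_measure lborel.emeasure_pair_measure_Times
        Basis_complex_def ennreal_mult Complex_eq)
qed (simp add: Complex_eq)

lemma nn_integral_lborel_complex:
  assumes [measurable]: "f \<in> borel_measurable (borel :: complex measure)"
  shows "(\<integral>\<^sup>+z. f z \<partial>lborel) = (\<integral>\<^sup>+x. \<integral>\<^sup>+y. f (Complex x y) \<partial>lborel \<partial>lborel)"
proof -
  have [measurable]: "(\<lambda>p. Complex (fst p) (snd p)) \<in> borel_measurable (lborel \<Otimes>\<^sub>M lborel)"
    by (simp add: Complex_eq)
  have "(\<integral>\<^sup>+z. f z \<partial>lborel) = (\<integral>\<^sup>+p. f (Complex (fst p) (snd p)) \<partial>(lborel \<Otimes>\<^sub>M lborel))"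
    by (subst lborel_complex_eq_distr_pair) (simp add: nn_integral_distr)
  also have "\<dots> = (\<integral>\<^sup>+x. \<integral>\<^sup>+y. f (Complex x y) \<partial>lborel \<partial>lborel)"
    using lborel.nn_integral_fst[of "\<lambda>p. f (Complex (fst p) (snd p))"] by simp
  finally show ?thesis .
qed

lemma add_cmod_eq_0_iff_nonpos_Reals: "s + of_real (cmod s) = 0 \<longleftrightarrow> s \<in> \<real>\<^sub>\<le>\<^sub>0"
  by (auto simp: complex_nonpos_Reals_iff complex_eq_iff cmod_def)

lemma cnj_Kst_exponent:
  "cnj ((t * z\<^sup>2 - cnj t * (cnj w)\<^sup>2 + 2 * z * cnj w) / (2 * s))
   = ((- t) * w\<^sup>2 - cnj (- t) * (cnj z)\<^sup>2 + 2 * w * cnj z) / (2 * cnj s)"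
  by (simp add: algebra_simps)

lemma cnj_Kst:
  assumes "s \<notin> \<real>\<^sub>\<le>\<^sub>0"
  shows "cnj (Kst s t z w) = Kst (cnj s) (- t) w z"
  unfolding Kst_def complex_cnj_mult exp_cnj cnj_Kst_exponent
  using cnj_csqrt[OF assms] by simp

lemma cnj_Kst_nonpos_Reals:
  assumes "s \<in> \<real>\<^sub>\<le>\<^sub>0"
  shows "cnj (Kst s t z w) = - Kst (cnj s) (- t) w z"
proof -
  have "Im s = 0" "Re s \<le> 0"
    using assms by (auto simp: complex_nonpos_Reals_iff)
  then have "cnj s = s" "cnj (csqrt s) = - csqrt s"
    by (simp_all add: complex_eq_iff)
  then show ?thesis
    unfolding Kst_def complex_cnj_mult exp_cnj cnj_Kst_exponent by simp
qed

lemma fock_space_iff_nn_integral: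
  assumes "f holomorphic_on UNIV"
  shows "f \<in> fock_space \<longleftrightarrow> (\<integral>\<^sup>+z. ennreal ((cmod (f z))\<^sup>2 * exp (- (cmod z)\<^sup>2)) \<partial>lborel) < \<infinity>"
proof -
  have "continuous_on UNIV f"
    using assms by (rule holomorphic_on_imp_continuous_on)
  then have [measurable]: "(\<lambda>z. (cmod (f z))\<^sup>2) \<in> borel_measurable borel"
    by (intro borel_measurable_continuous_onI continuous_intros)
  have [measurable]: "(\<lambda>z::complex. exp (- (cmod z)\<^sup>2) / pi) \<in> borel_measurable borel"
    by (intro borel_measurable_continuous_onI continuous_intros) simp
  have "f \<in> fock_space \<longleftrightarrow> (\<integral>\<^sup>+z. ennreal ((cmod (f z))\<^sup>2) \<partial>gauss_measure) < \<infinity>"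
    using assms by (simp add: fock_space_def integrable_iff_bounded gauss_measure_def)
  also have "(\<integral>\<^sup>+z. ennreal ((cmod (f z))\<^sup>2) \<partial>gauss_measure)
      = ennreal (1 / pi) * (\<integral>\<^sup>+z. ennreal ((cmod (f z))\<^sup>2 * exp (- (cmod z)\<^sup>2)) \<partial>lborel)"
    unfolding gauss_measure_def
    by (subst nn_integral_cmult[symmetric])
       (auto simp: nn_integral_density ennreal_mult[symmetric] intro!: nn_integral_cong)
  also have "\<dots> < \<infinity> \<longleftrightarrow> (\<integral>\<^sup>+z. ennreal ((cmod (f z))\<^sup>2 * exp (- (cmod z)\<^sup>2)) \<partial>lborel) < \<infinity>"
    by (auto simp: ennreal_mult_less_top)
  finally show ?thesis .
qed

lemma nn_integral_exp_Re_quadratic_finite_iff: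
  fixes a b c :: complex
  shows "(\<integral>\<^sup>+z. ennreal (exp (Re (a * z\<^sup>2 + b * z + c) - (cmod z)\<^sup>2)) \<partial>lborel) < \<infinity> \<longleftrightarrow> cmod a < 1"
proof -
  have meas: "(\<lambda>z. ennreal (exp (Re (a * z\<^sup>2 + b * z + c) - (cmod z)\<^sup>2))) \<in> borel_measurable borel"
    by (intro measurable_compose[OF _ measurable_ennreal] borel_measurable_continuous_onI continuous_intros)
  have in_coordinates: "Re (a * (Complex x y)\<^sup>2 + b * Complex x y + c) - (cmod (Complex x y))\<^sup>2
      = (Re a - 1) * x\<^sup>2 + 2 * (- Im a) * x * y + (- Re a - 1) * y\<^sup>2 + Re b * x + (- Im b) * y + Re c" for x y
    by (simp add: power2_eq_square algebra_simps cmod_def)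
  have "(\<integral>\<^sup>+z. ennreal (exp (Re (a * z\<^sup>2 + b * z + c) - (cmod z)\<^sup>2)) \<partial>lborel) < \<infinity>
      \<longleftrightarrow> (\<integral>\<^sup>+x. \<integral>\<^sup>+y. ennreal (exp ((Re a - 1) * x\<^sup>2 + 2 * (- Im a) * x * y + (- Re a - 1) * y\<^sup>2
            + Re b * x + (- Im b) * y + Re c)) \<partial>lborel \<partial>lborel) < \<infinity>"
    by (simp only: nn_integral_lborel_complex[OF meas] in_coordinates)
  also have "\<dots> \<longleftrightarrow> - Re a - 1 < 0 \<and> (Re a - 1) * (- Re a - 1) - (- Im a)\<^sup>2 > 0"
    by (rule nn_integral_exp_binary_quadratic_finite_iff)
  also have "(Re a - 1) * (- Re a - 1) - (- Im a)\<^sup>2 = 1 - (cmod a)\<^sup>2"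
    unfolding cmod_power2 by (simp add: algebra_simps power2_eq_square)
  also have "- Re a - 1 < 0 \<and> 1 - (cmod a)\<^sup>2 > 0 \<longleftrightarrow> cmod a < 1"
    using abs_Re_le_cmod[of a] by (auto simp: abs_square_less_1)
  finally show ?thesis .
qed

lemma norm_Kst_squared:
  assumes "s \<noteq> 0"
  shows "(cmod (Kst s t z w))\<^sup>2 = exp (Re ((t * z\<^sup>2 - cnj t * (cnj w)\<^sup>2 + 2 * z * cnj w) / s)) / cmod s"
proof -
  define X where "X = t * z\<^sup>2 - cnj t * (cnj w)\<^sup>2 + 2 * z * cnj w"
  have "X / (2 * s) = X / s / 2"
    by simp
  then have "2 * Re (X / (2 * s)) = Re (X / s)"
    by (simp only: Re_divide_numeral)
  then have "(cmod (exp (X / (2 * s))))\<^sup>2 = exp (Re (X / s))"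
    by (simp flip: exp_double)
  moreover have "Kst s t z w = exp (X / (2 * s)) / csqrt s"
    by (simp add: Kst_def X_def)
  ultimately show ?thesis
    unfolding X_def[symmetric] by (simp add: norm_divide power_divide)
qed

lemma Kst_in_fock_space_iff:
  assumes "s \<noteq> 0"
  shows "(\<lambda>z. Kst s t z w) \<in> fock_space \<longleftrightarrow> cmod t < cmod s"
proof -
  define q where "q z = t / s * z\<^sup>2 + 2 * cnj w / s * z + - cnj t * (cnj w)\<^sup>2 / s" for z
  have meas: "(\<lambda>z. ennreal (exp (Re (q z) - (cmod z)\<^sup>2))) \<in> borel_measurable lborel"
    unfolding q_def measurable_lborel2
    by (intro measurable_compose[OF _ measurable_ennreal] borel_measurable_continuous_onI continuous_intros)
  have weight: "(cmod (Kst s t z w))\<^sup>2 * exp (- (cmod z)\<^sup>2) = 1 / cmod s * exp (Re (q z) - (cmod z)\<^sup>2)" for z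
  proof -
    have "q z = (t * z\<^sup>2 - cnj t * (cnj w)\<^sup>2 + 2 * z * cnj w) / s"
      using assms by (simp add: q_def field_simps)
    then show ?thesis
      unfolding norm_Kst_squared[OF assms] by (simp add: exp_diff exp_minus divide_inverse)
  qed
  have integrand: "ennreal ((cmod (Kst s t z w))\<^sup>2 * exp (- (cmod z)\<^sup>2))
      = ennreal (1 / cmod s) * ennreal (exp (Re (q z) - (cmod z)\<^sup>2))" for z
    unfolding weight by (intro ennreal_mult) simp_all
  have "(\<lambda>z. Kst s t z w) holomorphic_on UNIV"
    unfolding Kst_def by (intro holomorphic_intros) (use assms in auto)
  then have "(\<lambda>z. Kst s t z w) \<in> fock_space
      \<longleftrightarrow> ennreal (1 / cmod s) * (\<integral>\<^sup>+z. ennreal (exp (Re (q z) - (cmod z)\<^sup>2)) \<partial>lborel) < \<infinity>"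
    by (simp add: fock_space_iff_nn_integral integrand nn_integral_cmult[OF meas])
  also have "\<dots> \<longleftrightarrow> (\<integral>\<^sup>+z. ennreal (exp (Re (q z) - (cmod z)\<^sup>2)) \<partial>lborel) < \<infinity>"
    using assms by (auto simp: ennreal_mult_less_top)
  also have "\<dots> \<longleftrightarrow> cmod (t / s) < 1"
    unfolding q_def by (rule nn_integral_exp_Re_quadratic_finite_iff)
  also have "\<dots> \<longleftrightarrow> cmod t < cmod s"
    using assms by (simp add: norm_divide)
  finally show ?thesis .
qed

theorem lemma1:
  fixes s t :: complex
  assumes "s \<noteq> 0"
  shows "(\<forall>z w. s + of_real (cmod s) \<noteq> 0 \<longrightarrow> cnj (Kst s t z w) = Kst (cnj s) (- t) w z)
       \<and> (\<forall>z w. Im s = 0 \<and> Re s < 0 \<longrightarrow> cnj (Kst s t z w) = - Kst (cnj s) (- t) w z)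
       \<and> (\<forall>w. (\<lambda>z. Kst s t z w) \<in> fock_space \<longleftrightarrow> cmod t < cmod s)"
  using cnj_Kst cnj_Kst_nonpos_Reals Kst_in_fock_space_iff[OF assms]
  by (auto simp: add_cmod_eq_0_iff_nonpos_Reals complex_nonpos_Reals_iff)

end
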